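(* Let $P,PA$ be labelings and $c$ a command with $P;PA\vdash_{\mathtt{true}}c$, and let $\rho_1\sim_P\rho_2$ and $\mu_1\sim_{PA}\mu_2$. Then $\langle c,\rho_1,\mu_1,\mathtt{true}\rangle\approx_i\langle c,\rho_2,\mu_2,\mathtt{true}\rangle$, i.e., for every directive list $D$ and observation lists $O_1,O_2$, if $\langle c,\rho_k,\mu_k,\mathtt{true}\rangle\xrightarrow[D]{O_k}{}_i^*$ some configuration for $k=1,2$ (ideal semantics w.r.t. $P$), then $O_1=O_2$.
   Context: Language AWhile: scalar variables $X\in\mathcal V$, arrays $a\in\mathcal A$; $e::=n\mid X\mid\mathrm{op}_{\mathbb N}(e,\dots,e)\mid be\,?\,e_1:e_2$; $be::=\mathtt{true}\mid\mathtt{false}\mid\mathrm{cmp}(e,e)\mid\mathrm{op}_{\mathbb B}(be,\dots,be)$; $c::=\mathtt{skip}\mid X:=e\mid c_1;c_2\mid\mathtt{if}\ be\ \mathtt{then}\ c_1\ \mathtt{else}\ c_2\mid\mathtt{while}\ be\ \mathtt{do}\ c\mid X\leftarrow a[e]\mid a[e]\leftarrow e'$. Scalar state $\rho:\mathcal V\to\mathbb N$; array state $\mu$ with sizes $|a|_\mu$ and values $\mu(a)[i]$; $[\![\cdot]\!]_\rho$ pure evaluation. Labels: $\mathtt{true}$=public, $\mathtt{false}$=secret; $\ell_1\sqsubseteq\ell_2$ iff $\ell_2=\mathtt{true}\Rightarrow\ell_1=\mathtt{true}$; $\ell_1\sqcup\ell_2=\ell_1\wedge\ell_2$. $P:\mathcal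 V\to$ labels, $PA:\mathcal A\to$ labels; $P(e),P(be)$ public iff all variables occurring are public. $\rho_1\sim_P\rho_2$ iff they agree on all public scalar variables; $\mu_1\sim_{PA}\mu_2$ iff they agree on sizes and contents of all public arrays. IFC typing $P;PA\vdash_{pc}c$: $\mathtt{skip}$; $X:=e$ if $pc\sqcup P(e)\sqsubseteq P(X)$; $c_1;c_2$ if both typed under $pc$; $\mathtt{if}$ if both branches typed under $pc\sqcup P(be)$; $\mathtt{while}$ if body typed under $pc\sqcup P(be)$; $X\leftarrow a[i]$ if $pc\sqcup P(i)\sqcup PA(a)\sqsubseteq P(X)$; $a[i]\leftarrow e$ if $pc\sqcup P(i)\sqcup P(e)\sqsubseteq PA(a)$. Ideal semantics w.r.t. $P$: configurations $\langle c,\rho,\mu,\beta\rangle$; steps $\xrightarrow[d]{o}{}_i$ with optional observation $o\in\{\mathrm{branch}(v),\mathrm{read}(a,i),\mathrm{write}(a,i)\}$ and optional directive $d\in\{\mathit{step},\mathit{force},\mathrm{load}(a',j),\mathrm{store}(a',j)\}$. $X:=e\to\mathtt{skip}$ with $\rho[X\mapsto[\![e]\!]_\rho]$; $c_1;c_2\to c_1';c_2$ whenever $c_1\to c_1'$; $\mathtt{skip};c\to c$; $\mathtt{while}\ be\ \mathtt{do}\ c\to\mathtt{if}\ be\ \mathtt{then}\ (c;\mathtt{while}\ be\ \mathtt{do}\ c)\ \mathtt{else}\ \mathtt{skip}$ (no obs/directive, flag kept). Conditional: $v=(P(be)\vee\neg\beta)\wedge[\![be]\!]_\rho$; $\mathit{step}$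 goes to branch $v$; $\mathit{force}$ goes to branch $\neg v$ and sets $\beta:=\mathtt{true}$; obs $\mathrm{branch}(v)$. Read $X\leftarrow a[ie]$ with $\mathit{step}$: $i=0$ if $(P(ie)=\mathtt{false}\vee P(X)=\mathtt{true})\wedge\beta$, else $[\![ie]\!]_\rho$; requires $i<|a|_\mu$; $X:=\mu(a)[i]$; obs $\mathrm{read}(a,i)$. Read with $\mathrm{load}(a',j)$: requires $\beta=\mathtt{true}$, $P(ie)=\mathtt{true}$, $P(X)=\mathtt{false}$, $i=[\![ie]\!]_\rho\ge|a|_\mu$, $j<|a'|_\mu$; $X:=\mu(a')[j]$; obs $\mathrm{read}(a,i)$. Write $a[ie]\leftarrow ae$ with $\mathit{step}$: $i=0$ if $(P(ie)=\mathtt{false}\vee P(ae)=\mathtt{false})\wedge\beta$, else $[\![ie]\!]_\rho$; requires $i<|a|_\mu$; $\mu[a[i]\mapsto[\![ae]\!]_\rho]$; obs $\mathrm{write}(a,i)$. Write with $\mathrm{store}(a',j)$: requires $\beta=\mathtt{true}$, $P(ie)=P(ae)=\mathtt{true}$, $i\ge|a|_\mu$, $j<|a'|_\mu$; $\mu[a'[j]\mapsto[\![ae]\!]_\rho]$; obs $\mathrm{write}(a,i)$. Multi-step $\xrightarrow[D]{O}{}_i^*$ is the reflexive-transitive closure collecting directives $D$ and observations $O$. *)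

theory Defs
  imports Main
begin

type_synonym vname = string
type_synonym aname = string
type_synonym val = nat
type_synonym label = bool  \<comment> \<open>True = public, False = secret\<close>
type_synonym state = "vname \<Rightarrow> val"
type_synonym astate = "aname \<Rightarrow> val list"  \<comment> \<open>size of a = length, contents = nth\<close>

datatype exp =
    ANum val
  | AVar vname
  | AOp "val list \<Rightarrow> val" "exp list"
  | ACond bexp exp exp
and bexp =
    BTrue
  | BFalse
  | BCmp "val \<Rightarrow> val \<Rightarrow> bool" exp exp
  | BOp "bool list \<Rightarrow> bool" "bexp list"

datatype com =
    Skip
  | Asgn vname exp
  | Seq com com
  | If bexp com com
  | While bexp com
  | ARead vname aname exp       \<comment> \<open>X <- a[e]\<close>
  | AWrite aname exp exp        \<comment> \<open>a[e] <- e'\<close>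

primrec aeval :: "exp \<Rightarrow> state \<Rightarrow> val"
  and beval :: "bexp \<Rightarrow> state \<Rightarrow> bool" where
  "aeval (ANum n) s = n"
| "aeval (AVar x) s = s x"
| "aeval (AOp f es) s = f (map (\<lambda>e. aeval e s) es)"
| "aeval (ACond b e1 e2) s = (if beval b s then aeval e1 s else aeval e2 s)"
| "beval BTrue s = True"
| "beval BFalse s = False"
| "beval (BCmp r e1 e2) s = r (aeval e1 s) (aeval e2 s)"
| "beval (BOp f bs) s = f (map (\<lambda>b. beval b s) bs)"

primrec avars :: "exp \<Rightarrow> vname set"
  and bvars :: "bexp \<Rightarrow> vname set" where
  "avars (ANum n) = {}"
| "avars (AVar x) = {x}"
| "avars (AOp f es) = \<Union> (set (map avars es))"
| "avars (ACond b e1 e2) = bvars b \<union> avars e1 \<union> avars e2"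
| "bvars BTrue = {}"
| "bvars BFalse = {}"
| "bvars (BCmp r e1 e2) = avars e1 \<union> avars e2"
| "bvars (BOp f bs) = \<Union> (set (map bvars bs))"

definition can_flow :: "label \<Rightarrow> label \<Rightarrow> bool" where
  "can_flow l1 l2 \<longleftrightarrow> (l2 \<longrightarrow> l1)"

definition join :: "label \<Rightarrow> label \<Rightarrow> label" where
  "join l1 l2 = (l1 \<and> l2)"

definition label_of_aexp :: "(vname \<Rightarrow> label) \<Rightarrow> exp \<Rightarrow> label" where
  "label_of_aexp P e \<longleftrightarrow> (\<forall>x\<in>avars e. P x)"

definition label_of_bexp :: "(vname \<Rightarrow> label) \<Rightarrow> bexp \<Rightarrow> label" where
  "label_of_bexp P b \<longleftrightarrow> (\<forall>x\<in>bvars b. P x)"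

definition pub_equiv :: "(vname \<Rightarrow> label) \<Rightarrow> state \<Rightarrow> state \<Rightarrow> bool" where
  "pub_equiv P s1 s2 \<longleftrightarrow> (\<forall>x. P x \<longrightarrow> s1 x = s2 x)"

definition apub_equiv :: "(aname \<Rightarrow> label) \<Rightarrow> astate \<Rightarrow> astate \<Rightarrow> bool" where
  "apub_equiv PA m1 m2 \<longleftrightarrow>
     (\<forall>a. PA a \<longrightarrow> length (m1 a) = length (m2 a) \<and> (\<forall>i < length (m1 a). m1 a ! i = m2 a ! i))"

inductive well_typed :: "(vname \<Rightarrow> label) \<Rightarrow> (aname \<Rightarrow> label) \<Rightarrow> label \<Rightarrow> com \<Rightarrow> bool" where
  WT_Skip: "well_typed P PA pc Skip"
| WT_Asgn: "can_flow (join pc (label_of_aexp P e)) (P X) \<Longrightarrow> well_typed P PA pc (Asgn X e)"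
| WT_Seq: "well_typed P PA pc c1 \<Longrightarrow> well_typed P PA pc c2 \<Longrightarrow> well_typed P PA pc (Seq c1 c2)"
| WT_If: "well_typed P PA (join pc (label_of_bexp P b)) c1 \<Longrightarrow>
          well_typed P PA (join pc (label_of_bexp P b)) c2 \<Longrightarrow> well_typed P PA pc (If b c1 c2)"
| WT_While: "well_typed P PA (join pc (label_of_bexp P b)) c \<Longrightarrow> well_typed P PA pc (While b c)"
| WT_ARead: "can_flow (join (join pc (label_of_aexp P i)) (PA a)) (P X) \<Longrightarrow>
             well_typed P PA pc (ARead X a i)"
| WT_AWrite: "can_flow (join (join pc (label_of_aexp P i)) (label_of_aexp P e)) (PA a) \<Longrightarrow>
              well_typed P PA pc (AWrite a i e)"

datatype observation = OBranch bool | ORead aname nat | OWrite aname nat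

datatype direction = DStep | DForce | DLoad aname nat | DStore aname nat

type_synonym config = "com \<times> state \<times> astate \<times> bool"

inductive ideal_step :: "(vname \<Rightarrow> label) \<Rightarrow> config \<Rightarrow> direction option \<Rightarrow> observation option
                          \<Rightarrow> config \<Rightarrow> bool" where
  ISM_Asgn: "ideal_step P (Asgn X e, s, m, b) None None (Skip, s(X := aeval e s), m, b)"
| ISM_Seq: "ideal_step P (c1, s, m, b) d ob (c1', s', m', b') \<Longrightarrow>
            ideal_step P (Seq c1 c2, s, m, b) d ob (Seq c1' c2, s', m', b')"
| ISM_Seq_Skip: "ideal_step P (Seq Skip c2, s, m, b) None None (c2, s, m, b)"
| ISM_While: "ideal_step P (While be c, s, m, b) None None
                (If be (Seq c (While be c)) Skip, s, m, b)"
| ISM_If: "v = ((label_of_bexp P be \<or> \<not> b) \<and> beval be s) \<Longrightarrow>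
           ideal_step P (If be c1 c2, s, m, b) (Some DStep) (Some (OBranch v))
             (if v then c1 else c2, s, m, b)"
| ISM_If_F: "v = ((label_of_bexp P be \<or> \<not> b) \<and> beval be s) \<Longrightarrow>
           ideal_step P (If be c1 c2, s, m, b) (Some DForce) (Some (OBranch v))
             (if v then c2 else c1, s, m, True)"
| ISM_ARead: "i = (if (\<not> label_of_aexp P ie \<or> P X) \<and> b then 0 else aeval ie s) \<Longrightarrow>
              i < length (m a) \<Longrightarrow>
              ideal_step P (ARead X a ie, s, m, b) (Some DStep) (Some (ORead a i))
                (Skip, s(X := m a ! i), m, b)"
| ISM_ARead_U: "b \<Longrightarrow> label_of_aexp P ie \<Longrightarrow> \<not> P X \<Longrightarrow>
              i = aeval ie s \<Longrightarrow> i \<ge> length (m a) \<Longrightarrow> j < length (m a') \<Longrightarrow>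
              ideal_step P (ARead X a ie, s, m, b) (Some (DLoad a' j)) (Some (ORead a i))
                (Skip, s(X := m a' ! j), m, b)"
| ISM_AWrite: "i = (if (\<not> label_of_aexp P ie \<or> \<not> label_of_aexp P ae) \<and> b then 0 else aeval ie s) \<Longrightarrow>
              i < length (m a) \<Longrightarrow>
              ideal_step P (AWrite a ie ae, s, m, b) (Some DStep) (Some (OWrite a i))
                (Skip, s, m(a := (m a)[i := aeval ae s]), b)"
| ISM_AWrite_U: "b \<Longrightarrow> label_of_aexp P ie \<Longrightarrow> label_of_aexp P ae \<Longrightarrow>
              i = aeval ie s \<Longrightarrow> i \<ge> length (m a) \<Longrightarrow> j < length (m a') \<Longrightarrow>
              ideal_step P (AWrite a ie ae, s, m, b) (Some (DStore a' j)) (Some (OWrite a i))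
                (Skip, s, m(a' := (m a')[j := aeval ae s]), b)"

inductive ideal_steps :: "(vname \<Rightarrow> label) \<Rightarrow> config \<Rightarrow> direction list \<Rightarrow> observation list
                           \<Rightarrow> config \<Rightarrow> bool" where
  ISMs_Refl: "ideal_steps P cfg [] [] cfg"
| ISMs_Step: "ideal_step P cfg d ob cfg' \<Longrightarrow> ideal_steps P cfg' ds obs cfg'' \<Longrightarrow>
              ideal_steps P cfg (case_option [] (\<lambda>x. [x]) d @ ds)
                                 (case_option [] (\<lambda>x. [x]) ob @ obs) cfg''"

end

theory Submission
  imports Defs
begin

text \<open>Once the speculation flag is set it is never cleared, and with the flag set the ideal
  semantics masks every secret-dependent choice: a conditional on a secret guard behaves as if the
  guard were false, a secret index is replaced by 0, and an out-of-bounds access is only possible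
  at a public index. Hence two runs from low-equivalent states under the same directives execute
  the same command and emit the same observations, while the typing discipline keeps the public
  parts of the states equal.\<close>

lemma eval_pub_equiv:
  "(\<forall>x\<in>avars e. P x) \<Longrightarrow> pub_equiv P s1 s2 \<Longrightarrow> aeval e s1 = aeval e s2"
  "(\<forall>x\<in>bvars b. P x) \<Longrightarrow> pub_equiv P s1 s2 \<Longrightarrow> beval b s1 = beval b s2"
proof (induction e and b)
  case (AOp f es) then show ?case by (auto intro!: arg_cong[where f=f] map_cong)
next
  case (BOp f bs) then show ?case by (auto intro!: arg_cong[where f=f] map_cong)
qed (auto simp: pub_equiv_def)

lemma aeval_pub_equiv: "label_of_aexp P e \<Longrightarrow> pub_equiv P s1 s2 \<Longrightarrow> aeval e s1 = aeval e s2"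
  using eval_pub_equiv(1) label_of_aexp_def by blast

lemma beval_pub_equiv: "label_of_bexp P b \<Longrightarrow> pub_equiv P s1 s2 \<Longrightarrow> beval b s1 = beval b s2"
  using eval_pub_equiv(2) label_of_bexp_def by blast

lemma well_typed_mono: "well_typed P PA pc c \<Longrightarrow> (pc \<longrightarrow> pc') \<Longrightarrow> well_typed P PA pc' c"
proof (induction arbitrary: pc' rule: well_typed.induct)
  case (WT_If P PA pc b c1 c2) then show ?case by (intro well_typed.intros) (auto simp: join_def)
next
  case (WT_While P PA pc b c) then show ?case by (intro well_typed.intros) (auto simp: join_def)
qed (intro well_typed.intros; auto simp: can_flow_def join_def)+

lemma well_typed_True: "well_typed P PA pc c \<Longrightarrow> well_typed P PA True c"
  using well_typed_mono by blast

fun silent :: "com \<Rightarrow> bool" where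
  "silent (Asgn X e) = True"
| "silent (While b c) = True"
| "silent (Seq c1 c2) = (c1 = Skip \<or> silent c1)"
| "silent _ = False"

lemma no_ideal_step_Skip: "\<not> ideal_step P (Skip, s, m, b) d ob cfg'"
  by (auto elim: ideal_step.cases)

lemma ideal_step_silent:
  "ideal_step P cfg d ob cfg' \<Longrightarrow> (d = None \<longleftrightarrow> silent (fst cfg)) \<and> (ob = None \<longleftrightarrow> silent (fst cfg))"
  by (induction rule: ideal_step.induct) (auto simp: no_ideal_step_Skip)

lemma pub_equiv_update:
  "pub_equiv P s1 s2 \<Longrightarrow> (P X \<Longrightarrow> v1 = v2) \<Longrightarrow> pub_equiv P (s1(X := v1)) (s2(X := v2))"
  by (simp add: pub_equiv_def)

lemma apub_equiv_iff: "apub_equiv PA m1 m2 \<longleftrightarrow> (\<forall>a. PA a \<longrightarrow> m1 a = m2 a)"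
  by (auto simp: apub_equiv_def list_eq_iff_nth_eq)

definition ideal_low_equiv :: "(vname \<Rightarrow> label) \<Rightarrow> (aname \<Rightarrow> label) \<Rightarrow> config \<Rightarrow> config \<Rightarrow> bool" where
  "ideal_low_equiv P PA cfg1 cfg2 \<longleftrightarrow>
     (\<exists>c s1 s2 m1 m2. cfg1 = (c, s1, m1, True) \<and> cfg2 = (c, s2, m2, True) \<and>
        well_typed P PA True c \<and> pub_equiv P s1 s2 \<and> apub_equiv PA m1 m2)"

lemma ideal_low_equiv_iff [simp]:
  "ideal_low_equiv P PA (c1, s1, m1, b1) (c2, s2, m2, b2) \<longleftrightarrow>
     c1 = c2 \<and> b1 \<and> b2 \<and> well_typed P PA True c1 \<and> pub_equiv P s1 s2 \<and> apub_equiv PA m1 m2"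
  by (auto simp: ideal_low_equiv_def)

inductive_cases ideal_step_AsgnE: "ideal_step P (Asgn X e, s, m, b) d ob cfg'"
inductive_cases ideal_step_SeqE: "ideal_step P (Seq c1 c2, s, m, b) d ob cfg'"
inductive_cases ideal_step_IfE: "ideal_step P (If be c1 c2, s, m, b) d ob cfg'"
inductive_cases ideal_step_WhileE: "ideal_step P (While be c, s, m, b) d ob cfg'"
inductive_cases ideal_step_AReadE: "ideal_step P (ARead X a ie, s, m, b) d ob cfg'"
inductive_cases ideal_step_AWriteE: "ideal_step P (AWrite a ie ae, s, m, b) d ob cfg'"

inductive_cases well_typed_SeqE: "well_typed P PA pc (Seq c1 c2)"
inductive_cases well_typed_IfE: "well_typed P PA pc (If be c1 c2)"
inductive_cases well_typed_WhileE: "well_typed P PA pc (While be c)"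
inductive_cases well_typed_AsgnE: "well_typed P PA pc (Asgn X e)"
inductive_cases well_typed_AReadE: "well_typed P PA pc (ARead X a ie)"
inductive_cases well_typed_AWriteE: "well_typed P PA pc (AWrite a ie ae)"

lemma ideal_step_lockstep:
  assumes "ideal_step P (c, s1, m1, True) d ob1 cfg1'"
    and "ideal_step P (c, s2, m2, True) d ob2 cfg2'"
    and "well_typed P PA True c" and "pub_equiv P s1 s2" and "apub_equiv PA m1 m2"
  shows "ob1 = ob2 \<and> ideal_low_equiv P PA cfg1' cfg2'"
  using assms
proof (induction P "(c, s1, m1, True)" d ob1 cfg1' arbitrary: c s1 m1 ob2 cfg2'
    rule: ideal_step.induct)
  case (ISM_Asgn P X e s1 m1)
  then show ?case
    by (auto elim!: ideal_step_AsgnE well_typed_AsgnE intro!: pub_equiv_update WT_Skip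
        simp: can_flow_def join_def aeval_pub_equiv)
next
  case (ISM_Seq P c1 s1 m1 d ob1 c1' s1' m1' b1' c2)
  from ISM_Seq.prems(1) show ?case
  proof (rule ideal_step_SeqE)
    fix c2' s2' m2' b2'
    assume "cfg2' = (Seq c2' c2, s2', m2', b2')"
      and "ideal_step P (c1, s2, m2, True) d ob2 (c2', s2', m2', b2')"
    moreover obtain "well_typed P PA True c1" "well_typed P PA True c2"
      using ISM_Seq.prems(2) by (auto elim: well_typed_SeqE)
    ultimately have "ob1 = ob2 \<and> ideal_low_equiv P PA (c1', s1', m1', b1') (c2', s2', m2', b2')"
      using ISM_Seq.hyps(2) ISM_Seq.prems(3,4) by blast
    with \<open>cfg2' = _\<close> \<open>well_typed P PA True c2\<close> show ?thesis by (auto intro: WT_Seq)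
  qed (use ISM_Seq.hyps in \<open>simp add: no_ideal_step_Skip\<close>)
next
  case (ISM_Seq_Skip P c2 s1 m1)
  then show ?case by (auto elim!: ideal_step_SeqE well_typed_SeqE simp: no_ideal_step_Skip)
next
  case (ISM_While P be c s1 m1)
  then show ?case
    by (auto elim!: ideal_step_WhileE well_typed_WhileE intro!: well_typed.intros
        elim: well_typed_mono simp: join_def)
next
  case (ISM_If v P be s1 c1 c2 m1)
  then show ?case
    by (auto elim!: ideal_step_IfE well_typed_IfE elim: well_typed_True dest: beval_pub_equiv)
next
  case (ISM_If_F v P be s1 c1 c2 m1)
  then show ?case
    by (auto elim!: ideal_step_IfE well_typed_IfE elim: well_typed_True dest: beval_pub_equiv)
next
  case (ISM_ARead i P ie X s1 m1 a)
  then show ?case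
    by (auto elim!: ideal_step_AReadE well_typed_AReadE intro!: pub_equiv_update WT_Skip
        simp: can_flow_def join_def aeval_pub_equiv apub_equiv_iff)
next
  case (ISM_ARead_U P ie X i s1 m1 a j a')
  then show ?case
    by (auto elim!: ideal_step_AReadE well_typed_AReadE intro!: pub_equiv_update WT_Skip
        simp: aeval_pub_equiv)
next
  case (ISM_AWrite i P ie ae s1 m1 a)
  then show ?case
    by (auto elim!: ideal_step_AWriteE well_typed_AWriteE intro!: WT_Skip
        simp: can_flow_def join_def aeval_pub_equiv apub_equiv_iff)
next
  case (ISM_AWrite_U P ie ae i s1 m1 a j a')
  then show ?case
    by (auto elim!: ideal_step_AWriteE well_typed_AWriteE intro!: WT_Skip
        simp: aeval_pub_equiv apub_equiv_iff)
qed

lemma ideal_steps_length: "ideal_steps P cfg ds obs cfg' \<Longrightarrow> length ds = length obs"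
  by (induction rule: ideal_steps.induct) (auto dest: ideal_step_silent split: option.splits)

lemma ideal_steps_same_observations:
  assumes "ideal_steps P cfg1 ds obs1 cfg1'" and "ideal_low_equiv P PA cfg1 cfg2"
    and "ideal_steps P cfg2 ds obs2 cfg2'"
  shows "obs1 = obs2"
  using assms
proof (induction arbitrary: cfg2 obs2 rule: ideal_steps.induct)
  case (ISMs_Refl P cfg)
  then show ?case using ideal_steps_length[OF ISMs_Refl(2)] by simp
next
  case (ISMs_Step P cfg1 d ob1 cfg1' ds obs1 cfg1'')
  note step1 = ISMs_Step.hyps(1) and steps1 = ISMs_Step.hyps(2) and IH = ISMs_Step.IH
  from ISMs_Step.prems(1) obtain c s1 s2 m1 m2 where cfg: "cfg1 = (c, s1, m1, True)"
    "cfg2 = (c, s2, m2, True)" and "well_typed P PA True c" "pub_equiv P s1 s2" "apub_equiv PA m1 m2"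
    by (auto simp: ideal_low_equiv_def)
  from ISMs_Step.prems(2) show ?case
  proof (cases rule: ideal_steps.cases)
    case ISMs_Refl
    then have "d = None" "ds = []" by (auto split: option.splits)
    moreover from \<open>d = None\<close> have "ob1 = None" using ideal_step_silent[OF step1] by simp
    moreover from \<open>ds = []\<close> have "obs1 = []" using ideal_steps_length[OF steps1] by simp
    ultimately show ?thesis using ISMs_Refl by simp
  next
    case (ISMs_Step d2 ob2 cfg2_mid ds2 obs2')
    note step2 = \<open>ideal_step P cfg2 d2 ob2 cfg2_mid\<close>
      and steps2 = \<open>ideal_steps P cfg2_mid ds2 obs2' cfg2'\<close>
    txt \<open>Both runs execute the same command, so they consume their common directive list
      in the same chunks.\<close>
    have "d = None \<longleftrightarrow> d2 = None"
      using ideal_step_silent[OF step1] ideal_step_silent[OF step2] cfg by simp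
    with ISMs_Step have "d2 = d" "ds2 = ds" by (auto split: option.splits)
    with step2 have "ob1 = ob2" and low: "ideal_low_equiv P PA cfg1' cfg2_mid"
      using ideal_step_lockstep step1 cfg \<open>well_typed P PA True c\<close>
        \<open>pub_equiv P s1 s2\<close> \<open>apub_equiv PA m1 m2\<close> by blast+
    moreover have "obs1 = obs2'"
      using IH[OF low] steps2 \<open>ds2 = ds\<close> by simp
    ultimately show ?thesis using ISMs_Step by simp
  qed
qed

theorem lemma5p3:
  fixes P :: "vname \<Rightarrow> label" and PA :: "aname \<Rightarrow> label" and c :: com
  assumes "well_typed P PA True c"
    and "pub_equiv P s1 s2"
    and "apub_equiv PA m1 m2"
  shows "\<forall>ds obs1 obs2 cfg1 cfg2.
           ideal_steps P (c, s1, m1, True) ds obs1 cfg1 \<longrightarrow>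
           ideal_steps P (c, s2, m2, True) ds obs2 cfg2 \<longrightarrow> obs1 = obs2"
proof (intro allI impI)
  have "ideal_low_equiv P PA (c, s1, m1, True) (c, s2, m2, True)"
    using assms by simp
  then show "obs1 = obs2"
    if "ideal_steps P (c, s1, m1, True) ds obs1 cfg1"
      and "ideal_steps P (c, s2, m2, True) ds obs2 cfg2" for ds obs1 obs2 cfg1 cfg2
    using ideal_steps_same_observations that by metis
qed

end
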